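(* Let $p$ be a prime and $M\in\mathrm{GL}(2,\mathbb{F}_p)$. Then $M$ is reversible within $\mathrm{GL}(2,\mathbb{F}_p)$ if and only if $M^2=\mathbb{1}$ or $\det(M)=1$. Whenever $M^2=\mathbb{1}$, one has $\mathcal{R}(M)=\mathcal{S}(M)$. If $\det(M)=1$ and $M^2\neq\mathbb{1}$, there exists an involutory reversor, and $\mathcal{R}(M)=\mathcal{S}(M)\rtimes C_2$.
   Context: $M$ is reversible within a group $\mathcal{G}$ if there is $G\in\mathcal{G}$ with $GMG^{-1}=M^{-1}$; such $G$ is a reversor. With $\mathcal{G}=\mathrm{GL}(2,\mathbb{F}_p)$: $\mathcal{S}(M)=\{G\in\mathcal{G}: GMG^{-1}=M\}$ (symmetry group) and $\mathcal{R}(M)=\{G\in\mathcal{G}: GMG^{-1}=M^{\pm1}\}$ (reversing symmetry group). $C_2$ is the cyclic group of order 2 (generated by an involutory reversor). *)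

theory Defs
  imports "HOL-Analysis.Analysis"
begin

text \<open>GL(2,F) for a field F: invertible 2x2 matrices over F.
  F_p is rendered as a finite field type 'a of prime cardinality p.\<close>

definition GL2 :: "('a::field ^ 2 ^ 2) set" where
  "GL2 = {G. invertible G}"

definition reversible_in :: "('a::field ^ 2 ^ 2) set \<Rightarrow> 'a ^ 2 ^ 2 \<Rightarrow> bool" where
  "reversible_in \<G> M \<longleftrightarrow> (\<exists>G\<in>\<G>. G ** M ** matrix_inv G = matrix_inv M)"

definition sym_group :: "('a::field ^ 2 ^ 2) \<Rightarrow> ('a ^ 2 ^ 2) set" where
  "sym_group M = {G \<in> GL2. G ** M ** matrix_inv G = M}"

definition rev_group :: "('a::field ^ 2 ^ 2) \<Rightarrow> ('a ^ 2 ^ 2) set" where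
  "rev_group M = {G \<in> GL2. G ** M ** matrix_inv G = M \<or> G ** M ** matrix_inv G = matrix_inv M}"

text \<open>Internal semidirect product R = S \<rtimes> \<langle>T\<rangle> with \<langle>T\<rangle> \<cong> C_2:
  T has order 2, S is normal in R, S \<inter> {1,T} = {1}, and R = S \<cdot> {1,T}.\<close>
definition semidirect_C2 :: "('a::field ^ 2 ^ 2) set \<Rightarrow> ('a ^ 2 ^ 2) set \<Rightarrow> 'a ^ 2 ^ 2 \<Rightarrow> bool" where
  "semidirect_C2 R S T \<longleftrightarrow>
     T ** T = mat 1 \<and> T \<noteq> mat 1 \<and> T \<in> R \<and>
     (\<forall>g\<in>R. \<forall>s\<in>S. g ** s ** matrix_inv g \<in> S) \<and>
     S \<inter> {mat 1, T} = {mat 1} \<and>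
     R = {s ** h | s h. s \<in> S \<and> h \<in> {mat 1, T}}"

end

theory Submission
  imports Defs
begin

text \<open>
  For a 2\<times>2 matrix, Cayley--Hamilton gives \<open>det M \<cdot> M\<inverse> = tr M \<cdot> 1 - M\<close>.
  A reversor preserves determinant and trace, so \<open>det M\<inverse> = det M\<close> and
  \<open>tr M\<inverse> = tr M\<close>; hence \<open>det M = \<plusminus>1\<close>, and if \<open>det M = -1 \<noteq> 1\<close> then \<open>tr M = 0\<close>,
  so \<open>M\<^sup>2 = 1\<close> by Cayley--Hamilton. Conversely every 2\<times>2 matrix is conjugate to its
  adjugate \<open>tr M \<cdot> 1 - M\<close> by an explicit involution, and for \<open>det M = 1\<close> the adjugate
  is \<open>M\<inverse>\<close>. Given an involutory reversor \<open>T\<close>, every reversor is a symmetry times \<open>T\<close>,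
  and \<open>T\<close> is itself a symmetry only if \<open>M = M\<inverse>\<close>.
\<close>

lemma matrix_inv_right:
  fixes A :: "'a::field^'n^'n"
  assumes "invertible A"
  shows "A ** matrix_inv A = mat 1"
  using someI_ex[OF assms[unfolded invertible_def]] by (simp add: matrix_inv_def)

lemma matrix_inv_left:
  fixes A :: "'a::field^'n^'n"
  assumes "invertible A"
  shows "matrix_inv A ** A = mat 1"
  using matrix_inv_right[OF assms] matrix_left_right_inverse by blast

lemma matrix_inv_unique:
  fixes A B :: "'a::field^'n^'n"
  assumes "A ** B = mat 1"
  shows "matrix_inv A = B"
proof -
  have "invertible A" using assms invertible_right_inverse by blast
  have "matrix_inv A = matrix_inv A ** (A ** B)" by (simp add: assms)
  also have "\<dots> = (matrix_inv A ** A) ** B" by (simp add: matrix_mul_assoc)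
  finally show ?thesis by (simp add: matrix_inv_left[OF \<open>invertible A\<close>])
qed

lemma invertible_matrix_inv:
  fixes A :: "'a::field^'n^'n"
  assumes "invertible A"
  shows "invertible (matrix_inv A)"
  using matrix_inv_left[OF assms] invertible_right_inverse by blast

lemma matrix_inv_matrix_inv:
  fixes A :: "'a::field^'n^'n"
  assumes "invertible A"
  shows "matrix_inv (matrix_inv A) = A"
  by (rule matrix_inv_unique) (rule matrix_inv_left[OF assms])

lemma conj_eq_iff_intertwining:
  fixes G A B :: "'a::field^'n^'n"
  assumes "invertible G"
  shows "G ** A ** matrix_inv G = B \<longleftrightarrow> G ** A = B ** G"
proof
  assume "G ** A ** matrix_inv G = B"
  then have "B ** G = G ** A ** (matrix_inv G ** G)" by (simp add: matrix_mul_assoc)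
  then show "G ** A = B ** G" by (simp add: matrix_inv_left[OF assms])
next
  assume "G ** A = B ** G"
  then have "G ** A ** matrix_inv G = B ** (G ** matrix_inv G)" by (simp add: matrix_mul_assoc)
  then show "G ** A ** matrix_inv G = B" by (simp add: matrix_inv_right[OF assms])
qed

lemma intertwining_mult:
  fixes G H A B C :: "'a::field^'n^'n"
  assumes "G ** A = B ** G" and "H ** B = C ** H"
  shows "(H ** G) ** A = C ** (H ** G)"
  by (metis assms matrix_mul_assoc)

lemma intertwining_matrix_inv_left:
  fixes G A B :: "'a::field^'n^'n"
  assumes "invertible G" and "G ** A = B ** G"
  shows "matrix_inv G ** B = A ** matrix_inv G"
  using assms conj_eq_iff_intertwining by (metis matrix_inv_left matrix_mul_assoc matrix_mul_lid)

lemma intertwining_matrix_inv: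
  fixes G A B :: "'a::field^'n^'n"
  assumes "invertible A" and "invertible B" and "G ** A = B ** G"
  shows "G ** matrix_inv A = matrix_inv B ** G"
proof -
  have "G ** matrix_inv A = (matrix_inv B ** B) ** G ** matrix_inv A"
    by (simp add: matrix_inv_left[OF assms(2)])
  also have "\<dots> = matrix_inv B ** (G ** A) ** matrix_inv A"
    by (simp add: assms(3) matrix_mul_assoc)
  also have "\<dots> = matrix_inv B ** G ** (A ** matrix_inv A)"
    by (simp add: matrix_mul_assoc)
  finally show ?thesis by (simp add: matrix_inv_right[OF assms(1)])
qed

lemma reversor_matrix_inv:
  fixes G M :: "'a::field^'n^'n"
  assumes "invertible M" and "G ** M = matrix_inv M ** G"
  shows "G ** matrix_inv M = M ** G"
  using intertwining_matrix_inv[OF assms(1) invertible_matrix_inv[OF assms(1)] assms(2)]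
  by (simp add: matrix_inv_matrix_inv[OF assms(1)])

lemma invertible_involution:
  fixes T :: "'a::field^'n^'n"
  assumes "T ** T = mat 1"
  shows "invertible T"
  using assms invertible_right_inverse by blast

lemma matrix2_eq_iff:
  "(A::'a^2^2) = B \<longleftrightarrow> A$1$1 = B$1$1 \<and> A$1$2 = B$1$2 \<and> A$2$1 = B$2$1 \<and> A$2$2 = B$2$2"
  by (auto simp: vec_eq_iff forall_2)

lemma matrix_matrix_mult_2:
  "((A::'a::semiring_1^2^2) ** B)$i$j = A$i$1 * B$1$j + A$i$2 * B$2$j"
  by (simp add: matrix_matrix_mult_def sum_2)

lemma mat_2_nth [simp]:
  "(mat x :: 'a::zero^2^2)$1$1 = x" "(mat x :: 'a::zero^2^2)$1$2 = 0"
  "(mat x :: 'a::zero^2^2)$2$1 = 0" "(mat x :: 'a::zero^2^2)$2$2 = x"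
  by (simp_all add: mat_def)

lemma trace_2: "trace (A::'a::comm_semiring_1^2^2) = A$1$1 + A$2$2"
  by (simp add: trace_def sum_2)

lemmas matrix2_simps = matrix2_eq_iff matrix_matrix_mult_2 trace_2 det_2

lemma cayley_hamilton_2:
  fixes M :: "'a::comm_ring_1^2^2"
  shows "M ** M = mat (trace M) ** M - mat (det M)"
  by (simp add: matrix2_simps algebra_simps)

lemma matrix_inv_2:
  fixes M :: "'a::field^2^2"
  assumes "det M \<noteq> 0"
  shows "matrix_inv M = mat (1 / det M) ** (mat (trace M) - M)"
proof (rule matrix_inv_unique)
  have "M ** (mat (trace M) - M) = mat (det M)"
    by (simp add: matrix2_simps algebra_simps)
  then show "M ** (mat (1 / det M) ** (mat (trace M) - M)) = mat 1"
    using assms by (simp add: matrix2_eq_iff matrix_matrix_mult_2 algebra_simps add_divide_distrib)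
qed

lemma det_mult_trace_matrix_inv_2:
  fixes M :: "'a::field^2^2"
  assumes "det M \<noteq> 0"
  shows "det M * trace (matrix_inv M) = trace M"
proof -
  have "trace (matrix_inv M) = (1 / det M) * (2 * trace M - trace M)"
    using assms by (simp add: matrix_inv_2 trace_2 matrix_matrix_mult_2 algebra_simps)
  with assms show ?thesis by simp
qed

lemma trace_conj:
  fixes G A :: "'a::field^'n^'n"
  assumes "invertible G"
  shows "trace (G ** A ** matrix_inv G) = trace A"
proof -
  have "trace (G ** A ** matrix_inv G) = trace (matrix_inv G ** G ** A)"
    by (metis matrix_mul_assoc trace_mul_sym)
  then show ?thesis by (simp add: matrix_inv_left[OF assms])
qed

lemma det_matrix_inv:
  fixes A :: "'a::field^'n^'n"
  assumes "invertible A"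
  shows "det A * det (matrix_inv A) = 1"
  by (metis det_I det_mul matrix_inv_right[OF assms])

lemma reversible_2_imp_involution_or_det_1:
  fixes M G :: "'a::field^2^2"
  assumes M: "invertible M" and G: "invertible G" and rev: "G ** M = matrix_inv M ** G"
  shows "M ** M = mat 1 \<or> det M = 1"
proof (rule disjCI)
  assume "det M \<noteq> 1"
  have "det G * det M = det (matrix_inv M) * det G"
    using rev by (metis det_mul)
  with G have "det M = det (matrix_inv M)"
    by (simp add: invertible_det_nz)
  with det_matrix_inv[OF M] have "det M * det M = 1" by simp
  with \<open>det M \<noteq> 1\<close> have det_M: "det M = -1"
    by (simp add: square_eq_1_iff)
  have "G ** M ** matrix_inv G = matrix_inv M"
    using rev conj_eq_iff_intertwining[OF G] by blast
  then have "trace (matrix_inv M) = trace M"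
    using trace_conj[OF G, of M] by simp
  with det_mult_trace_matrix_inv_2[of M] det_M have "(det M - 1) * trace M = 0"
    by (simp add: algebra_simps)
  with \<open>det M \<noteq> 1\<close> have "trace M = 0" by simp
  then show "M ** M = mat 1"
    using cayley_hamilton_2[of M] det_M by (simp add: matrix2_eq_iff)
qed

lemma involution_conj_adjugate_2:
  fixes M :: "'a::field^2^2"
  obtains T where "T ** T = mat 1" and "T ** M = (mat (trace M) - M) ** T"
proof (cases "M$2$1 = 0")
  case False
  let ?T = "vector [vector [1, (M$2$2 - M$1$1) / M$2$1], vector [0, -1]] :: 'a^2^2"
  have "?T ** ?T = mat 1" "?T ** M = (mat (trace M) - M) ** ?T"
    using False by (simp_all add: matrix2_simps field_simps)
  then show ?thesis by (rule that)
next
  case c0: True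
  show ?thesis
  proof (cases "M$1$2 = 0")
    case False
    let ?T = "vector [vector [1, 0], vector [(M$2$2 - M$1$1) / M$1$2, -1]] :: 'a^2^2"
    have "?T ** ?T = mat 1" "?T ** M = (mat (trace M) - M) ** ?T"
      using False c0 by (simp_all add: matrix2_simps field_simps)
    then show ?thesis by (rule that)
  next
    case True
    let ?T = "vector [vector [0, 1], vector [1, 0]] :: 'a^2^2"
    have "?T ** ?T = mat 1" "?T ** M = (mat (trace M) - M) ** ?T"
      using True c0 by (simp_all add: matrix2_simps)
    then show ?thesis by (rule that)
  qed
qed

lemma involutory_reversor_2:
  fixes M :: "'a::field^2^2"
  assumes "M ** M = mat 1 \<or> det M = 1"
  obtains T where "T ** T = mat 1" and "T ** M = matrix_inv M ** T"
proof (cases "M ** M = mat 1")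
  case True
  then have "matrix_inv M = M" by (rule matrix_inv_unique)
  then show ?thesis by (intro that[of "mat 1"]) simp_all
next
  case False
  with assms have "matrix_inv M = mat (trace M) - M"
    using matrix_inv_2[of M] by simp
  then show ?thesis using involution_conj_adjugate_2[of M] that by metis
qed

lemma mem_sym_group_iff:
  "G \<in> sym_group M \<longleftrightarrow> invertible G \<and> G ** M = M ** G"
  unfolding sym_group_def GL2_def using conj_eq_iff_intertwining by blast

lemma mem_rev_group_iff:
  "G \<in> rev_group M \<longleftrightarrow> invertible G \<and> (G ** M = M ** G \<or> G ** M = matrix_inv M ** G)"
  unfolding rev_group_def GL2_def using conj_eq_iff_intertwining by blast

lemma rev_group_eq_sym_group:
  fixes M :: "'a::field^2^2"
  assumes "M ** M = mat 1"
  shows "rev_group M = sym_group M"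
  using matrix_inv_unique[OF assms] by (simp add: rev_group_def sym_group_def)

lemma sym_group_normal_rev_group:
  fixes M :: "'a::field^2^2"
  assumes M: "invertible M" and g: "g \<in> rev_group M" and s: "s \<in> sym_group M"
  shows "g ** s ** matrix_inv g \<in> sym_group M"
proof -
  have inv_g: "invertible g" and inv_s: "invertible s" and sM: "s ** M = M ** s"
    using g s by (auto simp: mem_rev_group_iff mem_sym_group_iff)
  have "invertible (g ** s ** matrix_inv g)"
    by (simp add: inv_g inv_s invertible_matrix_inv invertible_mult)
  moreover have "g ** s ** matrix_inv g ** M = M ** (g ** s ** matrix_inv g)"
  proof (cases "g ** M = M ** g")
    case True
    show ?thesis
      using intertwining_mult[OF intertwining_mult[OF
            intertwining_matrix_inv_left[OF inv_g True] sM] True]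
      by (simp add: matrix_mul_assoc)
  next
    case False
    with g have "g ** M = matrix_inv M ** g" by (simp add: mem_rev_group_iff)
    then have gMi: "g ** matrix_inv M = M ** g" by (rule reversor_matrix_inv[OF M])
    have "s ** matrix_inv M = matrix_inv M ** s"
      using intertwining_matrix_inv[OF M M sM] .
    then show ?thesis
      using intertwining_mult[OF intertwining_mult[OF
            intertwining_matrix_inv_left[OF inv_g gMi]] gMi]
      by (simp add: matrix_mul_assoc)
  qed
  ultimately show ?thesis by (simp add: mem_sym_group_iff)
qed

lemma rev_group_eq_sym_group_times_reversor:
  fixes M T :: "'a::field^2^2"
  assumes M: "invertible M" and T: "T ** T = mat 1" and rev: "T ** M = matrix_inv M ** T"
  shows "rev_group M = {s ** h | s h. s \<in> sym_group M \<and> h \<in> {mat 1, T}}"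
proof -
  have inv_T: "invertible T" using T by (rule invertible_involution)
  have "g \<in> {s ** h | s h. s \<in> sym_group M \<and> h \<in> {mat 1, T}}" if g: "g \<in> rev_group M" for g
  proof (cases "g \<in> sym_group M")
    case True
    then show ?thesis by force
  next
    case False
    with g have inv_g: "invertible g" and "g ** M = matrix_inv M ** g"
      by (auto simp: mem_rev_group_iff mem_sym_group_iff)
    then have "g ** matrix_inv M = M ** g" by (simp add: reversor_matrix_inv[OF M])
    then have "g ** T \<in> sym_group M"
      using intertwining_mult[OF rev] inv_g inv_T
      by (simp add: mem_sym_group_iff invertible_mult)
    moreover have "g = (g ** T) ** T"
      by (simp add: T flip: matrix_mul_assoc)
    ultimately show ?thesis by blast
  qed
  moreover have "s ** h \<in> rev_group M" if s: "s \<in> sym_group M" and h: "h \<in> {mat 1, T}" for s h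
  proof -
    from s have inv_s: "invertible s" and sM: "s ** M = M ** s"
      by (auto simp: mem_sym_group_iff)
    have "s ** T ** M = matrix_inv M ** (s ** T)"
      using intertwining_mult[OF rev intertwining_matrix_inv[OF M M sM]] .
    with h inv_s inv_T sM show ?thesis
      by (auto simp: mem_rev_group_iff invertible_mult)
  qed
  ultimately show ?thesis by blast
qed

lemma semidirect_C2_rev_group:
  fixes M T :: "'a::field^2^2"
  assumes M: "invertible M" and not_involution: "M ** M \<noteq> mat 1"
    and T: "T ** T = mat 1" and rev: "T ** M = matrix_inv M ** T"
  shows "semidirect_C2 (rev_group M) (sym_group M) T"
proof -
  have "T \<notin> sym_group M"
  proof
    assume "T \<in> sym_group M"
    with rev have "matrix_inv M ** T ** T = M ** T ** T"
      by (simp add: mem_sym_group_iff)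
    then have "matrix_inv M = M" by (simp add: T flip: matrix_mul_assoc)
    with not_involution matrix_inv_right[OF M] show False by simp
  qed
  moreover have "mat 1 \<in> sym_group M"
    using invertible_right_inverse by (fastforce simp: mem_sym_group_iff)
  moreover have "T \<in> rev_group M"
    using invertible_involution[OF T] rev by (simp add: mem_rev_group_iff)
  ultimately show ?thesis
    unfolding semidirect_C2_def
    using T sym_group_normal_rev_group[OF M] rev_group_eq_sym_group_times_reversor[OF M T rev]
    by blast
qed

theorem theorem4p4:
  fixes M :: "'a::{field,finite} ^ 2 ^ 2"
  assumes "prime CARD('a)"
    and "M \<in> GL2"
  shows "(reversible_in GL2 M \<longleftrightarrow> (M ** M = mat 1 \<or> det M = 1))
       \<and> (M ** M = mat 1 \<longrightarrow> rev_group M = sym_group M)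
       \<and> (det M = 1 \<and> M ** M \<noteq> mat 1 \<longrightarrow>
            (\<exists>T. T \<in> GL2 \<and> T ** T = mat 1 \<and> T ** M ** matrix_inv T = matrix_inv M \<and>
                 semidirect_C2 (rev_group M) (sym_group M) T))"
proof -
  have M: "invertible M" using assms(2) by (simp add: GL2_def)
  have reversible_iff:
    "reversible_in GL2 M \<longleftrightarrow> (\<exists>G. invertible G \<and> G ** M = matrix_inv M ** G)"
    unfolding reversible_in_def GL2_def using conj_eq_iff_intertwining by blast
  have "reversible_in GL2 M \<longleftrightarrow> M ** M = mat 1 \<or> det M = 1"
  proof
    assume "reversible_in GL2 M"
    then obtain G where "invertible G" and "G ** M = matrix_inv M ** G"
      using reversible_iff by blast
    then show "M ** M = mat 1 \<or> det M = 1"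
      by (rule reversible_2_imp_involution_or_det_1[OF M])
  next
    assume "M ** M = mat 1 \<or> det M = 1"
    then obtain T where "T ** T = mat 1" and "T ** M = matrix_inv M ** T"
      by (rule involutory_reversor_2)
    then show "reversible_in GL2 M"
      using reversible_iff invertible_involution by blast
  qed
  moreover have "\<exists>T. T \<in> GL2 \<and> T ** T = mat 1 \<and> T ** M ** matrix_inv T = matrix_inv M \<and>
                 semidirect_C2 (rev_group M) (sym_group M) T"
    if det_M: "det M = 1" and not_involution: "M ** M \<noteq> mat 1"
  proof -
    obtain T where T: "T ** T = mat 1" and rev: "T ** M = matrix_inv M ** T"
      using det_M by (auto intro: involutory_reversor_2)
    have inv_T: "invertible T" using T by (rule invertible_involution)
    then have "T ** M ** matrix_inv T = matrix_inv M"
      using rev conj_eq_iff_intertwining by blast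
    with inv_T show ?thesis
      using T semidirect_C2_rev_group[OF M not_involution T rev]
      unfolding GL2_def by blast
  qed
  ultimately show ?thesis using rev_group_eq_sym_group by blast
qed

end
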